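(* Let $\widehat{\mathcal T}_\bullet,\widehat{\mathcal T}_\star$ be admissible hierarchical meshes and let $\widehat{\mathcal T}_\circ$ be the hierarchical mesh with domains $\widehat\Omega^k_\circ=\widehat\Omega^k_\bullet\cup\widehat\Omega^k_\star$, $k\in\mathbb N_0$ (equivalently $\widehat{\mathcal T}_\circ=\{\widehat T\in\widehat{\mathcal T}_\bullet:\exists\widehat T'\in\widehat{\mathcal T}_\star,\widehat T\subseteq\widehat T'\}\cup\{\widehat T\in\widehat{\mathcal T}_\star:\exists\widehat T'\in\widehat{\mathcal T}_\bullet,\widehat T\subseteq\widehat T'\}$). Then $\widehat{\mathcal T}_\circ$ is admissible, finer than both $\widehat{\mathcal T}_\bullet$ and $\widehat{\mathcal T}_\star$, and $\#\widehat{\mathcal T}_\circ\le\#\widehat{\mathcal T}_\bullet+\#\widehat{\mathcal T}_\star-\#\widehat{\mathcal T}^0$.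
   Context: Parameter domain $\widehat\Omega=(0,1)^d$, $d\ge2$; degrees $p_1,\dots,p_d\ge1$. For each $i$, $\widehat{\mathcal K}^0_i$ is a $p_i$-open knot vector in $[0,1]$ (first $p_i+1$ knots $0$, last $p_i+1$ knots $1$, interior multiplicities $\le p_i$); $\widehat{\mathcal K}^{k+1}_i$ arises from $\widehat{\mathcal K}^k_i$ by inserting each nondegenerate span's midpoint once. $\widehat{\mathcal B}^k$: tensor-product B-splines of degree $(p_1,\dots,p_d)$ for $\widehat{\mathcal K}^k$; $\widehat{\mathcal T}^k$: closed cells of level $k$. A hierarchical mesh is given by closed sets $[0,1]^d=\widehat\Omega^0\supseteq\widehat\Omega^1\supseteq\cdots$, each $\widehat\Omega^k$ ($k\ge1$) a union of cells of $\widehat{\mathcal T}^{k-1}$, eventually empty; mesh $\widehat{\mathcal T}=\bigcup_k\{\widehat T\in\widehat{\mathcal T}^k:\widehat T\subseteq\widehat\Omega^k,\widehat T\not\subseteq\widehat\Omega^{k+1}\}$, ${\rm level}(\widehat T)=k$; hierarchical basis $\widehat{\mathcal H}=\bigcup_k\{\widehat\beta\in\widehat{\mathcal B}^k:{\rm supp}\,\widehat\beta\subseteq\widehat\Omega^k,{\rm supp}\,\widehat\beta\not\subseteq\widehat\Omega^{k+1}\}$. Neighbors $\mathcal N(\widehat T)=\{\widehat T'\in\widehat{\mathcal T}:\exists\widehat\beta\in\widehat{\mathcal H},\widehat T,\widehat T'\subseteq{\rm supp}\,\widehat\beta\}$; the mesh is admissible if $|{\rm level}(\widehat T)-{\rm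 level}(\widehat T')|\le1$ whenever $\widehat T'\in\mathcal N(\widehat T)$. A mesh is finer than another if each of its domains $\widehat\Omega^k$ contains the corresponding domain of the other. *)

theory Defs
  imports "HOL-Analysis.Analysis"
begin

text \<open>Parameter domain (0,1)^d is modelled on the Euclidean space real^'n, with d = CARD('n).
  Degrees are p :: 'n => nat, initial knot vectors K0 :: 'n => real list.\<close>

definition open_knot_vector :: "nat \<Rightarrow> real list \<Rightarrow> bool" where
  "open_knot_vector p K \<longleftrightarrow>
     sorted K \<and> length K \<ge> 2 * (p + 1) \<and>
     take (p + 1) K = replicate (p + 1) 0 \<and>
     drop (length K - (p + 1)) K = replicate (p + 1) 1 \<and>
     (\<forall>x \<in> set (drop (p + 1) (take (length K - (p + 1)) K)). count_list K x \<le> p)"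

definition refine_knots :: "real list \<Rightarrow> real list" where
  "refine_knots K = (let u = remdups K in
      sort (K @ map (\<lambda>(a, b). (a + b) / 2) (zip u (tl u))))"

definition knots :: "('n \<Rightarrow> real list) \<Rightarrow> nat \<Rightarrow> 'n \<Rightarrow> real list" where
  "knots K0 k i = (refine_knots ^^ k) (K0 i)"

definition brk :: "('n \<Rightarrow> real list) \<Rightarrow> nat \<Rightarrow> 'n \<Rightarrow> real list" where
  "brk K0 k i = remdups (knots K0 k i)"

definition cells :: "('n::finite \<Rightarrow> real list) \<Rightarrow> nat \<Rightarrow> (real^'n) set set" where
  "cells K0 k = {cbox (\<chi> i. brk K0 k i ! m i) (\<chi> i. brk K0 k i ! Suc (m i)) | m.
                  \<forall>i. Suc (m i) < length (brk K0 k i)}"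

text \<open>Tensor-product B-splines of level k are indexed by multi-indices j; the (closed)
  support of the B-spline with index j is the box spanned by the knots j_i .. j_i+p_i+1.\<close>
definition bidx :: "('n \<Rightarrow> nat) \<Rightarrow> ('n \<Rightarrow> real list) \<Rightarrow> nat \<Rightarrow> ('n \<Rightarrow> nat) set" where
  "bidx p K0 k = {j. \<forall>i. j i + p i + 1 < length (knots K0 k i)}"

definition bsupp :: "('n::finite \<Rightarrow> nat) \<Rightarrow> ('n \<Rightarrow> real list) \<Rightarrow> nat \<Rightarrow> ('n \<Rightarrow> nat) \<Rightarrow> (real^'n) set" where
  "bsupp p K0 k j = cbox (\<chi> i. knots K0 k i ! j i) (\<chi> i. knots K0 k i ! (j i + p i + 1))"

definition hier_domains :: "('n::finite \<Rightarrow> real list) \<Rightarrow> (nat \<Rightarrow> (real^'n) set) \<Rightarrow> bool" where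
  "hier_domains K0 \<Omega> \<longleftrightarrow>
     \<Omega> 0 = cbox 0 One \<and>
     (\<forall>k. \<Omega> (Suc k) \<subseteq> \<Omega> k) \<and>
     (\<forall>k. \<exists>S \<subseteq> cells K0 k. \<Omega> (Suc k) = \<Union>S) \<and>
     (\<exists>N. \<Omega> N = {})"

definition mesh :: "('n::finite \<Rightarrow> real list) \<Rightarrow> (nat \<Rightarrow> (real^'n) set) \<Rightarrow> (real^'n) set set" where
  "mesh K0 \<Omega> = {T. \<exists>k. T \<in> cells K0 k \<and> T \<subseteq> \<Omega> k \<and> \<not> T \<subseteq> \<Omega> (Suc k)}"

definition level :: "('n::finite \<Rightarrow> real list) \<Rightarrow> (real^'n) set \<Rightarrow> nat" where
  "level K0 T = (LEAST k. T \<in> cells K0 k)"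

text \<open>Hierarchical basis, as pairs (level, multi-index).\<close>
definition hbasis :: "('n::finite \<Rightarrow> nat) \<Rightarrow> ('n \<Rightarrow> real list) \<Rightarrow> (nat \<Rightarrow> (real^'n) set)
    \<Rightarrow> (nat \<times> ('n \<Rightarrow> nat)) set" where
  "hbasis p K0 \<Omega> = {(k, j). j \<in> bidx p K0 k \<and> bsupp p K0 k j \<subseteq> \<Omega> k \<and>
                            \<not> bsupp p K0 k j \<subseteq> \<Omega> (Suc k)}"

definition neighbors :: "('n::finite \<Rightarrow> nat) \<Rightarrow> ('n \<Rightarrow> real list) \<Rightarrow> (nat \<Rightarrow> (real^'n) set)
    \<Rightarrow> (real^'n) set \<Rightarrow> (real^'n) set set" where
  "neighbors p K0 \<Omega> T = {T' \<in> mesh K0 \<Omega>. \<exists>(k, j) \<in> hbasis p K0 \<Omega>.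
       T \<subseteq> bsupp p K0 k j \<and> T' \<subseteq> bsupp p K0 k j}"

definition admissible :: "('n::finite \<Rightarrow> nat) \<Rightarrow> ('n \<Rightarrow> real list) \<Rightarrow> (nat \<Rightarrow> (real^'n) set) \<Rightarrow> bool" where
  "admissible p K0 \<Omega> \<longleftrightarrow>
     (\<forall>T \<in> mesh K0 \<Omega>. \<forall>T' \<in> neighbors p K0 \<Omega> T.
        \<bar>int (level K0 T) - int (level K0 T')\<bar> \<le> 1)"

definition finer :: "(nat \<Rightarrow> (real^'n) set) \<Rightarrow> (nat \<Rightarrow> (real^'n) set) \<Rightarrow> bool" where
  "finer \<Omega>f \<Omega>c \<longleftrightarrow> (\<forall>k. \<Omega>c k \<subseteq> \<Omega>f k)"

end

theory Submission
  imports Defs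
begin

text \<open>
  A cell of level \<open>l\<close> lies in \<open>\<Omega> n\<close> (\<open>n \<le> l + 1\<close>) as soon as its centre does, since \<open>\<Omega> n\<close> is a union
  of cells of level \<open>n - 1\<close>, and cells of different levels are either nested or have disjoint interiors.
  So a cell inside \<open>\<Omega>b n \<union> \<Omega>s n\<close> already lies in one of the two domains.

  Admissibility is equivalent to the following condition on the domains: if the support of a
  B-spline of level \<open>k\<close> contains a cell of level \<open>l \<ge> k + 2\<close> lying in \<open>\<Omega> l\<close>, then the support lies
  in \<open>\<Omega> (k + 1)\<close>. That admissibility implies the condition is shown by induction on \<open>k\<close>, using that
  every support of level \<open>k + 1\<close> lies in a support of level \<open>k\<close>. By the first remark the condition
  passes to unions.

  For the count, \<open>#mesh = #cells\<^sub>0 + \<Sum>\<^sub>k \<Sum>\<^sub>C (#children C - 1)\<close>, where \<open>C\<close> ranges over the cells of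
  level \<open>k\<close> contained in \<open>\<Omega> (k + 1)\<close>. For the union these are exactly the cells refined in one of
  the two meshes, and all summands are nonnegative.
\<close>

section \<open>Knot vectors\<close>

lemma mset_refine_knots:
  "mset (refine_knots K) = mset K + mset (map (\<lambda>(a, b). (a + b) / 2) (zip (remdups K) (tl (remdups K))))"
  by (simp add: refine_knots_def Let_def)

lemma set_refine_knots:
  "set (refine_knots K) = set K \<union> set (map (\<lambda>(a, b). (a + b) / 2) (zip (remdups K) (tl (remdups K))))"
  by (simp add: refine_knots_def Let_def)

lemma sorted_refine_knots: "sorted (refine_knots K)"
  by (simp add: refine_knots_def Let_def)

lemma midpoint_in_refine_knots:
  assumes "Suc r < length (remdups K)"
  shows "(remdups K ! r + remdups K ! Suc r) / 2 \<in> set (refine_knots K)"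
proof -
  let ?u = "remdups K"
  have "(?u ! r, ?u ! Suc r) \<in> set (zip ?u (tl ?u))"
    using assms by (auto simp: in_set_zip nth_tl intro!: exI[of _ r])
  then show ?thesis unfolding set_refine_knots by force
qed

lemma knots_0: "knots K0 0 i = K0 i"
  by (simp add: knots_def)

lemma knots_Suc: "knots K0 (Suc k) i = refine_knots (knots K0 k i)"
  by (simp add: knots_def)

lemma set_knots_mono: "k \<le> l \<Longrightarrow> set (knots K0 k i) \<subseteq> set (knots K0 l i)"
  by (rule lift_Suc_mono_le[of "\<lambda>k. set (knots K0 k i)"]) (auto simp: knots_Suc set_refine_knots)

definition clamped_unit_knots :: "nat \<Rightarrow> real list \<Rightarrow> bool" where
  "clamped_unit_knots p K \<longleftrightarrow> sorted K \<and> set K \<subseteq> {0..1} \<and> 0 \<in> set K \<and> p + 1 \<le> count_list K 1"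

lemma clamped_unit_knots_refine:
  assumes "clamped_unit_knots p K"
  shows "clamped_unit_knots p (refine_knots K)"
proof -
  let ?u = "remdups K"
  have "set (map (\<lambda>(a, b). (a + b) / 2) (zip ?u (tl ?u))) \<subseteq> {0..1}"
  proof
    fix x assume "x \<in> set (map (\<lambda>(a, b). (a + b) / 2) (zip ?u (tl ?u)))"
    then obtain a b where ab: "(a, b) \<in> set (zip ?u (tl ?u))" "x = (a + b) / 2" by auto
    then have "a \<in> set K" "b \<in> set K"
      using set_zip_leftD set_zip_rightD list.set_sel(2)
        by (metis set_remdups, metis list.sel(2) set_remdups)
    then have "a \<in> {0..1}" "b \<in> {0..1}" using assms by (auto simp: clamped_unit_knots_def)
    then show "x \<in> {0..1}" using ab(2) by auto
  qed
  moreover have "count_list K 1 \<le> count_list (refine_knots K) 1"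
    by (metis count_mset mset_refine_knots count_union le_add1)
  ultimately show ?thesis
    using assms sorted_refine_knots unfolding clamped_unit_knots_def set_refine_knots by auto
qed

lemma open_knot_vector_clamped:
  assumes "open_knot_vector p K"
  shows "clamped_unit_knots p K"
proof -
  let ?n = "length K - (p + 1)"
  have sorted: "sorted K" and len: "length K \<ge> 2 * (p + 1)"
    and zeros: "take (p + 1) K = replicate (p + 1) 0" and ones: "drop ?n K = replicate (p + 1) 1"
    using assms by (auto simp: open_knot_vector_def)
  have "K ! 0 = 0" using zeros by (metis Suc_eq_plus1 nth_replicate nth_take zero_less_Suc)
  moreover have "0 < length K" by (rule less_le_trans[OF _ len]) simp
  ultimately have "0 \<in> set K" by (metis nth_mem)
  have "count_list K 1 = count_list (take ?n K) 1 + count_list (drop ?n K) 1"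
    by (metis append_take_drop_id count_list_append)
  also have "count_list (drop ?n K) 1 = p + 1"
    using ones by (metis count_mset count_replicate_mset mset_replicate)
  finally have "p + 1 \<le> count_list K 1" by simp
  have sorted_split: "\<forall>a\<in>set (take q K). \<forall>b\<in>set (drop q K). a \<le> b" for q
    using sorted by (metis append_take_drop_id sorted_append)
  have "x \<le> 1" if "x \<in> set K" for x
    using sorted_split[of ?n] that ones
    by (metis Un_iff append_take_drop_id in_set_replicate list.set_intros(1) replicate_Suc
        set_append Suc_eq_plus1 order_refl)
  moreover have "0 \<le> x" if "x \<in> set K" for x
    using sorted_split[of "p + 1"] that zeros
    by (metis Un_iff append_take_drop_id in_set_replicate list.set_intros(1) replicate_Suc
        set_append Suc_eq_plus1 order_refl)
  ultimately show ?thesis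
    unfolding clamped_unit_knots_def
    using sorted \<open>0 \<in> set K\<close> \<open>p + 1 \<le> count_list K 1\<close> by auto
qed

lemma clamped_unit_knots_knots:
  assumes "\<forall>i. open_knot_vector (p i) (K0 i)"
  shows "clamped_unit_knots (p i) (knots K0 k i)"
  by (induction k) (auto simp: knots_0 knots_Suc open_knot_vector_clamped assms clamped_unit_knots_refine)

lemma length_filter_strictly_between_le:
  fixes t :: "real list"
  assumes sorted: "sorted t" and len: "j + p + 1 < length t"
  shows "length (filter (\<lambda>x. t ! j < x \<and> x < t ! (j + p + 1)) t) \<le> p"
proof -
  have "{i. i < length t \<and> t ! j < t ! i \<and> t ! i < t ! (j + p + 1)} \<subseteq> {Suc j..j + p}"
  proof
    fix i assume i: "i \<in> {i. i < length t \<and> t ! j < t ! i \<and> t ! i < t ! (j + p + 1)}"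
    have "\<not> i \<le> j" using sorted_nth_mono[OF sorted, of i j] len i by auto
    moreover have "\<not> j + p + 1 \<le> i" using sorted_nth_mono[OF sorted, of "j + p + 1" i] i by auto
    ultimately show "i \<in> {Suc j..j + p}" by simp
  qed
  then have "card {i. i < length t \<and> t ! j < t ! i \<and> t ! i < t ! (j + p + 1)} \<le> card {Suc j..j + p}"
    by (intro card_mono) auto
  then show ?thesis by (simp add: length_filter_conv_card)
qed

lemma clamped_index_below_one:
  assumes s: "clamped_unit_knots p s" and q: "q < length s" "s ! q < 1"
  shows "q + p + 1 < length s"
proof -
  have "{i. i < length s \<and> s ! i = 1} \<subseteq> {Suc q..<length s}"
  proof
    fix i assume i: "i \<in> {i. i < length s \<and> s ! i = 1}"
    have "\<not> i \<le> q"
      using s q i sorted_nth_mono[of s i q] by (auto simp: clamped_unit_knots_def)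
    then show "i \<in> {Suc q..<length s}" using i by simp
  qed
  then have "card {i. i < length s \<and> s ! i = 1} \<le> card {Suc q..<length s}"
    by (intro card_mono) auto
  moreover have "count_list s 1 = card {i. i < length s \<and> s ! i = 1}"
    unfolding count_list_eq_length_filter length_filter_conv_card by (metis (mono_tags))
  ultimately have "p + 1 \<le> card {Suc q..<length s}"
    using s unfolding clamped_unit_knots_def by linarith
  then show ?thesis by simp
qed

text \<open>For \<open>a < 1\<close> the first of the \<open>p + 2\<close> knots is the last knot \<open>\<le> a\<close>; for \<open>a = 1\<close> take the
  last \<open>p + 2\<close> knots.\<close>

lemma clamped_knots_cover_interval:
  assumes s: "clamped_unit_knots p s" and a: "0 \<le> a" "a \<le> 1" and b: "b \<le> 1"
    and few: "length (filter (\<lambda>x. a < x \<and> x < b) s) \<le> p"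
  shows "\<exists>q. q + p + 1 < length s \<and> s ! q \<le> a \<and> b \<le> s ! (q + p + 1)"
proof (cases "a < 1")
  case True
  have sorted: "sorted s" using s by (simp add: clamped_unit_knots_def)
  obtain i0 where i0: "i0 < length s" "s ! i0 = 0"
    using s by (metis clamped_unit_knots_def in_set_conv_nth)
  define q where "q = (GREATEST i. i < length s \<and> s ! i \<le> a)"
  have q: "q < length s \<and> s ! q \<le> a"
    unfolding q_def by (rule GreatestI_nat[of _ i0 "length s"]) (use i0 a in auto)
  have above: "a < s ! i" if "q < i" "i < length s" for i
    using Greatest_le_nat[of "\<lambda>i. i < length s \<and> s ! i \<le> a" i "length s"] that
    unfolding q_def[symmetric] by force
  have len: "q + p + 1 < length s" using clamped_index_below_one[OF s] q True by simp
  have "b \<le> s ! (q + p + 1)"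
  proof (rule ccontr)
    assume "\<not> b \<le> s ! (q + p + 1)"
    then have "{Suc q..q + p + 1} \<subseteq> {i. i < length s \<and> a < s ! i \<and> s ! i < b}"
      using above len sorted_nth_mono[OF sorted, of _ "q + p + 1"] by fastforce
    then have "card {Suc q..q + p + 1} \<le> card {i. i < length s \<and> a < s ! i \<and> s ! i < b}"
      by (intro card_mono) auto
    then show False using few by (simp add: length_filter_conv_card)
  qed
  then show ?thesis using len q by blast
next
  case False
  have sorted: "sorted s" and ones: "p + 1 \<le> count_list s 1" and "0 \<in> set s"
    using s by (simp_all add: clamped_unit_knots_def)
  have "count_list s 1 < length s"
    using \<open>0 \<in> set s\<close> unfolding count_list_eq_length_filter by (intro length_filter_less[of 0]) auto
  then have len: "p + 2 \<le> length s" using ones by linarith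
  define q where "q = length s - p - 2"
  obtain r where r: "r < length s" "s ! r = 1"
    using ones by (metis count_list_0_iff in_set_conv_nth not_one_le_zero add_is_0 le_zero_eq)
  have "r \<le> q + p + 1" "q + p + 1 < length s" using r len q_def by auto
  then have "s ! r \<le> s ! (q + p + 1)" by (rule sorted_nth_mono[OF sorted])
  moreover have "s ! q \<in> set s" using len q_def by simp
  then have "s ! q \<le> 1" using s by (auto simp: clamped_unit_knots_def)
  ultimately show ?thesis using False a b r len q_def by (intro exI[of _ q]) auto
qed

lemma refine_support_within_support:
  assumes s: "clamped_unit_knots p s" and j: "j + p + 1 < length (refine_knots s)"
  shows "\<exists>q. q + p + 1 < length s \<and> s ! q \<le> refine_knots s ! j
            \<and> refine_knots s ! (j + p + 1) \<le> s ! (q + p + 1)"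
proof -
  let ?t = "refine_knots s"
  let ?between = "\<lambda>x. ?t ! j < x \<and> x < ?t ! (j + p + 1)"
  have "set ?t \<subseteq> {0..1}" using clamped_unit_knots_refine[OF s] by (simp add: clamped_unit_knots_def)
  moreover have "?t ! j \<in> set ?t" "?t ! (j + p + 1) \<in> set ?t" using j by auto
  ultimately have bounds: "0 \<le> ?t ! j" "?t ! j \<le> 1" "?t ! (j + p + 1) \<le> 1" by auto
  have "mset (filter ?between s) \<subseteq># mset (filter ?between ?t)"
    by (simp add: mset_refine_knots multiset_filter_mono)
  then have "length (filter ?between s) \<le> length (filter ?between ?t)"
    by (metis size_mset size_mset_mono)
  also have "\<dots> \<le> p" by (rule length_filter_strictly_between_le[OF sorted_refine_knots j])
  finally show ?thesis using clamped_knots_cover_interval[OF s bounds] by blast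
qed

lemma bsupp_within_coarser_bsupp:
  fixes K0 :: "'n::finite \<Rightarrow> real list"
  assumes K0: "\<forall>i. open_knot_vector (p i) (K0 i)" and j: "j \<in> bidx p K0 (Suc k)"
  shows "\<exists>j' \<in> bidx p K0 k. bsupp p K0 (Suc k) j \<subseteq> bsupp p K0 k j'"
proof -
  have "\<forall>i. \<exists>q. q + p i + 1 < length (knots K0 k i) \<and> knots K0 k i ! q \<le> knots K0 (Suc k) i ! j i
            \<and> knots K0 (Suc k) i ! (j i + p i + 1) \<le> knots K0 k i ! (q + p i + 1)"
    using refine_support_within_support[OF clamped_unit_knots_knots[OF K0]] j
    by (simp add: bidx_def knots_Suc)
  then obtain f where f: "\<forall>i. f i + p i + 1 < length (knots K0 k i)
      \<and> knots K0 k i ! f i \<le> knots K0 (Suc k) i ! j i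
      \<and> knots K0 (Suc k) i ! (j i + p i + 1) \<le> knots K0 k i ! (f i + p i + 1)"
    by metis
  have "f \<in> bidx p K0 k" using f unfolding bidx_def by auto
  moreover have "bsupp p K0 (Suc k) j \<subseteq> bsupp p K0 k f"
    using f unfolding bsupp_def subset_iff mem_box_cart vec_lambda_beta by (meson order_trans)
  ultimately show ?thesis by blast
qed

lemma strict_sorted_span_between:
  fixes u :: "real list"
  assumes u: "sorted_wrt (<) u" and ab: "a \<in> set u" "b \<in> set u" "a < b" and x: "a \<le> x" "x \<le> b"
  shows "\<exists>m. Suc m < length u \<and> a \<le> u ! m \<and> u ! m \<le> x \<and> x \<le> u ! Suc m \<and> u ! Suc m \<le> b"
proof -
  obtain ia where ia: "ia < length u" "u ! ia = a" using ab by (metis in_set_conv_nth)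
  obtain ib where ib: "ib < length u" "u ! ib = b" using ab by (metis in_set_conv_nth)
  have sorted: "sorted u" using u strict_sorted_iff by blast
  have "ia < ib" using sorted_nth_mono[OF sorted, of ib ia] ia ib ab by force
  define m where "m = (GREATEST m. m < ib \<and> u ! m \<le> x)"
  have m: "m < ib \<and> u ! m \<le> x"
    unfolding m_def by (rule GreatestI_nat[of _ ia ib]) (use \<open>ia < ib\<close> ia x in auto)
  have "ia \<le> m"
    unfolding m_def by (rule Greatest_le_nat[of _ ia ib]) (use \<open>ia < ib\<close> ia x in auto)
  then have "a \<le> u ! m" using m ia ib sorted by (metis sorted_nth_mono order.strict_trans)
  moreover have "x \<le> u ! Suc m \<and> u ! Suc m \<le> b"
  proof (cases "Suc m = ib")
    case False
    then have "Suc m < ib" using m by simp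
    moreover have "\<not> (Suc m < ib \<and> u ! Suc m \<le> x)"
      using Greatest_le_nat[of "\<lambda>m. m < ib \<and> u ! m \<le> x" "Suc m" ib] unfolding m_def[symmetric]
        by auto
    ultimately show ?thesis using sorted_nth_mono[OF sorted, of "Suc m" ib] ib by auto
  qed (use ib x in auto)
  ultimately show ?thesis using m ib by (intro exI[of _ m]) auto
qed

lemma strict_sorted_span_within:
  fixes u v :: "real list"
  assumes "sorted_wrt (<) v" and sub: "set u \<subseteq> set v"
    and s: "Suc s < length v" "v ! s < x" "x < v ! Suc s"
    and r: "Suc r < length u" "u ! r \<le> x" "x \<le> u ! Suc r"
  shows "u ! r \<le> v ! s \<and> v ! Suc s \<le> u ! Suc r"
proof -
  have sorted: "sorted v" using assms(1) strict_sorted_iff by blast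
  obtain q where q: "q < length v" "v ! q = u ! r" using sub r
    by (metis in_set_conv_nth nth_mem subsetD Suc_lessD)
  obtain q' where q': "q' < length v" "v ! q' = u ! Suc r" using sub r
    by (metis in_set_conv_nth nth_mem subsetD)
  have "q \<le> s" using sorted_nth_mono[OF sorted, of "Suc s" q] q r s by force
  moreover have "Suc s \<le> q'" using sorted_nth_mono[OF sorted, of q' s] q' r s by force
  ultimately show ?thesis
    using q q' s sorted_nth_mono[OF sorted, of q s] sorted_nth_mono[OF sorted, of "Suc s" q']
      by auto
qed

lemma strict_sorted_not_in_span:
  fixes u :: "real list"
  assumes "sorted_wrt (<) u" and s: "Suc s < length u" "u ! s < c" "c < u ! Suc s"
  shows "c \<notin> set u"
proof
  assume "c \<in> set u"
  then obtain q where q: "q < length u" "u ! q = c" by (metis in_set_conv_nth)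
  have sorted: "sorted u" using assms(1) strict_sorted_iff by blast
  show False
    using q s sorted_nth_mono[OF sorted, of q s] sorted_nth_mono[OF sorted, of "Suc s" q]
      by linarith
qed

section \<open>Cells\<close>

locale unit_knots =
  fixes K0 :: "'n::finite \<Rightarrow> real list"
  assumes sorted_knots: "sorted (knots K0 k i)"
    and knots_in_unit: "set (knots K0 k i) \<subseteq> {0..1}"

definition cell_index :: "('n::finite \<Rightarrow> real list) \<Rightarrow> nat \<Rightarrow> ('n \<Rightarrow> nat) \<Rightarrow> bool" where
  "cell_index K0 k m \<longleftrightarrow> (\<forall>i. Suc (m i) < length (brk K0 k i))"

definition cell :: "('n::finite \<Rightarrow> real list) \<Rightarrow> nat \<Rightarrow> ('n \<Rightarrow> nat) \<Rightarrow> (real^'n) set" where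
  "cell K0 k m = cbox (\<chi> i. brk K0 k i ! m i) (\<chi> i. brk K0 k i ! Suc (m i))"

definition cell_center :: "('n::finite \<Rightarrow> real list) \<Rightarrow> nat \<Rightarrow> ('n \<Rightarrow> nat) \<Rightarrow> real^'n" where
  "cell_center K0 k m = (\<chi> i. (brk K0 k i ! m i + brk K0 k i ! Suc (m i)) / 2)"

lemma cells_eq: "cells K0 k = {cell K0 k m | m. cell_index K0 k m}"
  by (simp add: cells_def cell_def cell_index_def)

lemma mem_cell:
  "x \<in> cell K0 k m \<longleftrightarrow> (\<forall>i. brk K0 k i ! m i \<le> x $ i \<and> x $ i \<le> brk K0 k i ! Suc (m i))"
  by (simp add: cell_def mem_box_cart)

lemma set_brk: "set (brk K0 k i) = set (knots K0 k i)"
  by (simp add: brk_def)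

lemma set_brk_mono: "k \<le> l \<Longrightarrow> set (brk K0 k i) \<subseteq> set (brk K0 l i)"
  unfolding set_brk by (rule set_knots_mono)

lemma knots_nth_in_brk: "n < length (knots K0 k i) \<Longrightarrow> knots K0 k i ! n \<in> set (brk K0 k i)"
  unfolding set_brk by simp

lemma midpoint_brk_in_knots_Suc:
  "Suc r < length (brk K0 k i) \<Longrightarrow> (brk K0 k i ! r + brk K0 k i ! Suc r) / 2 \<in> set (knots K0 (Suc k) i)"
  unfolding brk_def knots_Suc by (rule midpoint_in_refine_knots)

lemma finite_cells: "finite (cells K0 k)"
proof -
  have "{m. cell_index K0 k m} \<subseteq> Pi\<^sub>E UNIV (\<lambda>i. {..<length (brk K0 k i)})"
    unfolding cell_index_def PiE_def extensional_def by (auto intro: Suc_lessD)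
  then have "finite {m. cell_index K0 k m}" by (rule finite_subset) (auto intro: finite_PiE)
  then show ?thesis unfolding cells_eq by (simp add: setcompr_eq_image)
qed

lemma finite_cells_filter: "finite {C \<in> cells K0 k. P C}"
  using finite_cells by (rule finite_subset[rotated]) auto

lemma unit_knots_if_open:
  assumes "\<forall>i. open_knot_vector (p i) (K0 i)"
  shows "unit_knots K0"
  by unfold_locales (use clamped_unit_knots_knots[OF assms] in \<open>auto simp: clamped_unit_knots_def\<close>)

context unit_knots
begin

lemma strict_sorted_brk: "sorted_wrt (<) (brk K0 k i)"
  using sorted_knots unfolding brk_def strict_sorted_iff by (simp add: sorted_remdups)

lemma brk_in_unit: "x \<in> set (brk K0 k i) \<Longrightarrow> 0 \<le> x \<and> x \<le> 1"
  using knots_in_unit unfolding set_brk by (metis atLeastAtMost_iff subsetD)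

lemma cell_lower_less_upper: "cell_index K0 k m \<Longrightarrow> brk K0 k i ! m i < brk K0 k i ! Suc (m i)"
  unfolding cell_index_def by (metis strict_sorted_brk sorted_wrt_nth_less lessI)

lemma cell_center_strict:
  "cell_index K0 k m \<Longrightarrow>
     brk K0 k i ! m i < cell_center K0 k m $ i \<and> cell_center K0 k m $ i < brk K0 k i ! Suc (m i)"
  using cell_lower_less_upper[of k m i] by (simp add: cell_center_def)

lemma cell_center_mem: "cell_index K0 k m \<Longrightarrow> cell_center K0 k m \<in> cell K0 k m"
  using cell_center_strict unfolding mem_cell by (meson less_imp_le)

lemma cell_corners_mem:
  assumes "cell_index K0 k m"
  shows "(\<chi> i. brk K0 k i ! m i) \<in> cell K0 k m" "(\<chi> i. brk K0 k i ! Suc (m i)) \<in> cell K0 k m"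
  using cell_lower_less_upper[OF assms] unfolding mem_cell by (auto intro: less_imp_le)

lemma cell_nonempty: "T \<in> cells K0 k \<Longrightarrow> T \<noteq> {}"
  unfolding cells_eq using cell_center_mem by blast

lemma cells_subset_unit_box: "T \<in> cells K0 k \<Longrightarrow> T \<subseteq> cbox 0 One"
proof
  fix x assume "T \<in> cells K0 k" "x \<in> T"
  then obtain m where m: "cell_index K0 k m" "x \<in> cell K0 k m" unfolding cells_eq by auto
  have "0 \<le> x $ i \<and> x $ i \<le> 1" for i
  proof -
    have "Suc (m i) < length (brk K0 k i)" using m(1) by (simp add: cell_index_def)
    then have "0 \<le> brk K0 k i ! m i" "brk K0 k i ! Suc (m i) \<le> 1"
      using brk_in_unit nth_mem Suc_lessD by blast+
    then show ?thesis using m(2) unfolding mem_cell by (meson order_trans)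
  qed
  moreover have "(One :: real^'n) $ i = 1" for i by (metis Cart_1 one_index)
  ultimately show "x \<in> cbox 0 One" by (simp add: mem_box_cart)
qed

lemma cell_subset_cell:
  assumes kl: "k \<le> l" and m: "cell_index K0 l m" and r: "cell_index K0 k r"
    and x: "\<forall>i. brk K0 l i ! m i < x $ i \<and> x $ i < brk K0 l i ! Suc (m i)" and "x \<in> cell K0 k r"
  shows "cell K0 l m \<subseteq> cell K0 k r"
proof -
  have "brk K0 k i ! r i \<le> brk K0 l i ! m i \<and> brk K0 l i ! Suc (m i) \<le> brk K0 k i ! Suc (r i)" for i
    by (rule strict_sorted_span_within[OF strict_sorted_brk set_brk_mono[OF kl]])
      (use assms in \<open>auto simp: cell_index_def mem_cell\<close>)
  then show ?thesis unfolding cell_def subset_iff mem_box_cart vec_lambda_beta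
    by (meson order_trans)
qed

lemma cells_level_unique:
  assumes "T \<in> cells K0 k" "T \<in> cells K0 l"
  shows "k = l"
proof -
  have neq: "cell K0 k m \<noteq> cell K0 l r"
    if kl: "k < l" and m: "cell_index K0 k m" and r: "cell_index K0 l r" for k l m r
  proof
    assume eq: "cell K0 k m = cell K0 l r"
    fix i
    let ?u = "brk K0 k i" and ?v = "brk K0 l i"
    have "(\<chi> i. brk K0 k i ! m i) \<in> cell K0 l r" "(\<chi> i. brk K0 k i ! Suc (m i)) \<in> cell K0 l r"
      "(\<chi> i. brk K0 l i ! r i) \<in> cell K0 k m" "(\<chi> i. brk K0 l i ! Suc (r i)) \<in> cell K0 k m"
      using cell_corners_mem[OF m] cell_corners_mem[OF r] eq by auto
    then have ends: "?u ! m i = ?v ! r i" "?u ! Suc (m i) = ?v ! Suc (r i)"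
      unfolding mem_cell by (auto intro: order_antisym)
    \<comment> \<open>the midpoint of the level \<open>k\<close> span is a knot of level \<open>k + 1 \<le> l\<close>,
      but interior to the equal level \<open>l\<close> span\<close>
    define c where "c = (?u ! m i + ?u ! Suc (m i)) / 2"
    have "c \<in> set (knots K0 (Suc k) i)"
      unfolding c_def using m by (intro midpoint_brk_in_knots_Suc) (simp add: cell_index_def)
    then have "c \<in> set ?v" using set_knots_mono[of "Suc k" l K0 i] kl unfolding set_brk by auto
    moreover have "c \<notin> set ?v"
      using cell_lower_less_upper[OF m, of i] r ends
      by (intro strict_sorted_not_in_span[OF strict_sorted_brk, of "r i"]) (auto simp: cell_index_def c_def)
    ultimately show False by simp
  qed
  obtain m r where "cell_index K0 k m" "cell_index K0 l r" "T = cell K0 k m" "T = cell K0 l r"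
    using assms unfolding cells_eq by auto
  then show ?thesis using neq by (metis linorder_neqE_nat)
qed

lemma level_cells: "T \<in> cells K0 k \<Longrightarrow> level K0 T = k"
  unfolding level_def by (rule Least_equality) (auto dest: cells_level_unique)

lemma cell_has_child:
  assumes m: "cell_index K0 k m"
  shows "\<exists>m'. cell_index K0 (Suc k) m' \<and> cell K0 (Suc k) m' \<subseteq> cell K0 k m"
proof -
  have "\<exists>s. Suc s < length (brk K0 (Suc k) i) \<and> brk K0 k i ! m i \<le> brk K0 (Suc k) i ! s
           \<and> brk K0 (Suc k) i ! Suc s \<le> brk K0 k i ! Suc (m i)" for i
  proof -
    let ?u = "brk K0 k i" and ?v = "brk K0 (Suc k) i"
    define c where "c = (?u ! m i + ?u ! Suc (m i)) / 2"
    have lt: "?u ! m i < ?u ! Suc (m i)" by (rule cell_lower_less_upper[OF m])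
    have "c \<in> set ?v"
      unfolding c_def set_brk using m
        by (intro midpoint_brk_in_knots_Suc) (simp add: cell_index_def)
    moreover have "?u ! m i \<in> set ?v"
      using m set_brk_mono[of k "Suc k" K0 i] unfolding cell_index_def
        by (meson Suc_lessD le_SucI order_refl nth_mem subsetD)
    ultimately obtain s where "Suc s < length ?v" "?u ! m i \<le> ?v ! s" "?v ! Suc s \<le> c"
      using strict_sorted_span_between[OF strict_sorted_brk, where a = "?u ! m i" and b = c and x = "?u ! m i"]
        lt c_def by auto
    then show ?thesis using lt c_def by (intro exI[of _ s]) auto
  qed
  then obtain f where "\<forall>i. Suc (f i) < length (brk K0 (Suc k) i) \<and> brk K0 k i ! m i \<le> brk K0 (Suc k) i ! f i
      \<and> brk K0 (Suc k) i ! Suc (f i) \<le> brk K0 k i ! Suc (m i)"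
    by metis
  then show ?thesis
    by (intro exI[of _ f]) (auto simp: cell_index_def mem_cell subset_iff, (meson order_trans)+)
qed

lemma parent_cell_unique:
  assumes E: "E \<in> cells K0 (Suc k)" and C: "C \<in> cells K0 k" "E \<subseteq> C" and C': "C' \<in> cells K0 k" "E \<subseteq> C'"
  shows "C = C'"
proof -
  obtain m where m: "cell_index K0 (Suc k) m" "E = cell K0 (Suc k) m" using E unfolding cells_eq
    by auto
  have sub: "C \<subseteq> C'" if C: "C \<in> cells K0 k" "E \<subseteq> C" and C': "C' \<in> cells K0 k" "E \<subseteq> C'" for C C'
  proof -
    obtain r where r: "cell_index K0 k r" "C = cell K0 k r" using C unfolding cells_eq by auto
    obtain r' where r': "cell_index K0 k r'" "C' = cell K0 k r'" using C' unfolding cells_eq by auto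
    let ?x = "cell_center K0 (Suc k) m"
    have "brk K0 k i ! r i < ?x $ i \<and> ?x $ i < brk K0 k i ! Suc (r i)" for i
    proof -
      have "(\<chi> i. brk K0 (Suc k) i ! m i) \<in> C" "(\<chi> i. brk K0 (Suc k) i ! Suc (m i)) \<in> C"
        using cell_corners_mem[OF m(1)] m(2) C(2) by auto
      then have "brk K0 k i ! r i \<le> brk K0 (Suc k) i ! m i"
          "brk K0 (Suc k) i ! Suc (m i) \<le> brk K0 k i ! Suc (r i)"
        unfolding r(2) mem_cell by auto
      then show ?thesis using cell_center_strict[OF m(1), of i] by auto
    qed
    moreover have "?x \<in> cell K0 k r'" using cell_center_mem[OF m(1)] m(2) C'(2) r'(2) by auto
    ultimately show ?thesis using cell_subset_cell[OF order_refl r(1) r'(1)] r r' by blast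
  qed
  show ?thesis using sub[OF C C'] sub[OF C' C] by simp
qed

end

section \<open>Hierarchical domains\<close>

lemma hier_domains_0: "hier_domains K0 \<Omega> \<Longrightarrow> \<Omega> 0 = cbox 0 One"
  unfolding hier_domains_def by (elim conjE)

lemma hier_domains_Suc_subset: "hier_domains K0 \<Omega> \<Longrightarrow> \<Omega> (Suc k) \<subseteq> \<Omega> k"
  unfolding hier_domains_def by (elim conjE) (rule spec)

lemma hier_domains_Suc_cells: "hier_domains K0 \<Omega> \<Longrightarrow> \<exists>S \<subseteq> cells K0 k. \<Omega> (Suc k) = \<Union>S"
  unfolding hier_domains_def by (elim conjE) (rule spec)

lemma hier_domains_antimono: "hier_domains K0 \<Omega> \<Longrightarrow> k \<le> l \<Longrightarrow> \<Omega> l \<subseteq> \<Omega> k"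
  by (rule lift_Suc_antimono_le[of \<Omega>]) (auto dest: hier_domains_Suc_subset)

lemma hier_domains_common_empty:
  assumes "hier_domains K0 \<Omega>b" "hier_domains K0 \<Omega>s"
  obtains M where "\<Omega>b M = {}" "\<Omega>s M = {}"
proof -
  obtain N1 N2 where "\<Omega>b N1 = {}" "\<Omega>s N2 = {}" using assms unfolding hier_domains_def by blast
  then show ?thesis
    using hier_domains_antimono[OF assms(1), of N1 "max N1 N2"]
      hier_domains_antimono[OF assms(2), of N2 "max N1 N2"] that by auto
qed

lemma hier_domains_union:
  assumes hb: "hier_domains K0 \<Omega>b" and hs: "hier_domains K0 \<Omega>s"
  shows "hier_domains K0 (\<lambda>k. \<Omega>b k \<union> \<Omega>s k)"
proof -
  have "\<exists>S \<subseteq> cells K0 k. \<Omega>b (Suc k) \<union> \<Omega>s (Suc k) = \<Union>S" for k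
  proof -
    obtain Sb where "Sb \<subseteq> cells K0 k" "\<Omega>b (Suc k) = \<Union>Sb" using hier_domains_Suc_cells[OF hb]
      by blast
    moreover obtain Ss where "Ss \<subseteq> cells K0 k" "\<Omega>s (Suc k) = \<Union>Ss"
      using hier_domains_Suc_cells[OF hs] by blast
    ultimately show ?thesis by (intro exI[of _ "Sb \<union> Ss"]) auto
  qed
  moreover obtain M where "\<Omega>b M = {}" "\<Omega>s M = {}" by (rule hier_domains_common_empty[OF hb hs])
  ultimately show ?thesis
    using hier_domains_0[OF hb] hier_domains_0[OF hs]
      hier_domains_Suc_subset[OF hb] hier_domains_Suc_subset[OF hs]
    unfolding hier_domains_def by blast
qed

context unit_knots
begin

lemma cell_subset_domain:
  assumes h: "hier_domains K0 \<Omega>" and m: "cell_index K0 l m" and n: "n \<le> Suc l"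
    and c: "cell_center K0 l m \<in> \<Omega> n"
  shows "cell K0 l m \<subseteq> \<Omega> n"
proof (cases n)
  case 0
  then show ?thesis using cells_subset_unit_box hier_domains_0[OF h] m unfolding cells_eq by auto
next
  case (Suc k)
  obtain S where S: "S \<subseteq> cells K0 k" "\<Omega> n = \<Union>S" using hier_domains_Suc_cells[OF h] Suc by blast
  obtain E where E: "E \<in> S" "cell_center K0 l m \<in> E" using c S by auto
  obtain r where r: "cell_index K0 k r" "E = cell K0 k r" using E S unfolding cells_eq by auto
  have "cell K0 l m \<subseteq> E"
    unfolding r(2)
      by (rule cell_subset_cell[OF _ m r(1)]) (use Suc n cell_center_strict[OF m] E r in auto)
  then show ?thesis using E S by auto
qed

lemma cell_subset_union_domain:
  assumes hb: "hier_domains K0 \<Omega>b" and hs: "hier_domains K0 \<Omega>s"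
    and D: "D \<in> cells K0 l" "D \<subseteq> \<Omega>b n \<union> \<Omega>s n" and n: "n \<le> Suc l"
  shows "D \<subseteq> \<Omega>b n \<or> D \<subseteq> \<Omega>s n"
proof -
  obtain m where m: "cell_index K0 l m" "D = cell K0 l m" using D(1) unfolding cells_eq by auto
  then have "cell_center K0 l m \<in> \<Omega>b n \<union> \<Omega>s n" using cell_center_mem D(2) by auto
  then show ?thesis using cell_subset_domain[OF hb m(1) n] cell_subset_domain[OF hs m(1) n] m(2)
    by auto
qed

lemma mesh_cell_below:
  assumes h: "hier_domains K0 \<Omega>" and D: "D \<in> cells K0 l" "D \<subseteq> \<Omega> l"
  shows "\<exists>T l'. T \<in> mesh K0 \<Omega> \<and> T \<subseteq> D \<and> T \<in> cells K0 l' \<and> l \<le> l'"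
proof -
  obtain N where N: "\<Omega> N = {}" using h unfolding hier_domains_def by blast
  show ?thesis
    using D
  proof (induction "N - l" arbitrary: D l)
    case 0
    then have "\<Omega> l = {}" using hier_domains_antimono[OF h, of N l] N by simp
    then show ?case using 0 cell_nonempty by auto
  next
    case (Suc n)
    show ?case
    proof (cases "D \<subseteq> \<Omega> (Suc l)")
      case False
      then have "D \<in> mesh K0 \<Omega>" using Suc.prems unfolding mesh_def by auto
      then show ?thesis using Suc.prems(1) by blast
    next
      case True
      obtain m where m: "cell_index K0 l m" "D = cell K0 l m" using Suc.prems(1) unfolding cells_eq
        by auto
      obtain m' where m': "cell_index K0 (Suc l) m'" "cell K0 (Suc l) m' \<subseteq> D"
        using cell_has_child[OF m(1)] m(2) by blast
      have "cell K0 (Suc l) m' \<in> cells K0 (Suc l)" using m'(1) unfolding cells_eq by auto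
      moreover have "n = N - Suc l" using Suc.hyps(2) by simp
      ultimately obtain T l'
        where "T \<in> mesh K0 \<Omega> \<and> T \<subseteq> cell K0 (Suc l) m' \<and> T \<in> cells K0 l' \<and> Suc l \<le> l'"
        using Suc.hyps(1) m'(2) True by blast
      then show ?thesis using m'(2) by (intro exI[of _ T] exI[of _ l']) auto
    qed
  qed
qed

end

section \<open>Admissibility\<close>

definition support_admissible ::
    "('n::finite \<Rightarrow> nat) \<Rightarrow> ('n \<Rightarrow> real list) \<Rightarrow> (nat \<Rightarrow> (real^'n) set) \<Rightarrow> bool" where
  "support_admissible p K0 \<Omega> \<longleftrightarrow> (\<forall>k j l D. j \<in> bidx p K0 k \<longrightarrow> D \<in> cells K0 l \<longrightarrow> k + 2 \<le> l \<longrightarrow>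
      D \<subseteq> bsupp p K0 k j \<longrightarrow> D \<subseteq> \<Omega> l \<longrightarrow> bsupp p K0 k j \<subseteq> \<Omega> (Suc k))"

context unit_knots
begin

lemma bsupp_subset_unit_box:
  assumes j: "j \<in> bidx p K0 k"
  shows "bsupp p K0 k j \<subseteq> cbox 0 One"
proof
  fix x assume x: "x \<in> bsupp p K0 k j"
  have "0 \<le> x $ i \<and> x $ i \<le> 1" for i
  proof -
    have "j i + p i + 1 < length (knots K0 k i)" using j unfolding bidx_def by auto
    then have "0 \<le> knots K0 k i ! j i" "knots K0 k i ! (j i + p i + 1) \<le> 1"
      using brk_in_unit knots_nth_in_brk by (meson add_lessD1)+
    then show ?thesis using x unfolding bsupp_def mem_box_cart vec_lambda_beta
      by (meson order_trans)
  qed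
  moreover have "(One :: real^'n) $ i = 1" for i by (metis Cart_1 one_index)
  ultimately show "x \<in> cbox 0 One" by (simp add: mem_box_cart)
qed

lemma bsupp_nondegenerate:
  assumes D: "D \<in> cells K0 l" "D \<subseteq> bsupp p K0 k j"
  shows "knots K0 k i ! j i < knots K0 k i ! (j i + p i + 1)"
proof -
  obtain m where m: "cell_index K0 l m" "D = cell K0 l m" using D(1) unfolding cells_eq by auto
  then have "(\<chi> i. brk K0 l i ! m i) \<in> bsupp p K0 k j" "(\<chi> i. brk K0 l i ! Suc (m i)) \<in> bsupp p K0 k j"
    using cell_corners_mem D(2) by auto
  then have "knots K0 k i ! j i \<le> brk K0 l i ! m i"
      "brk K0 l i ! Suc (m i) \<le> knots K0 k i ! (j i + p i + 1)"
    unfolding bsupp_def mem_box_cart by auto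
  then show ?thesis using cell_lower_less_upper[OF m(1), of i] by linarith
qed

lemma cell_in_bsupp_containing:
  assumes j: "j \<in> bidx p K0 k" and x: "x \<in> bsupp p K0 k j"
    and nondeg: "\<forall>i. knots K0 k i ! j i < knots K0 k i ! (j i + p i + 1)"
  shows "\<exists>T \<in> cells K0 k. x \<in> T \<and> T \<subseteq> bsupp p K0 k j"
proof -
  have "\<exists>s. Suc s < length (brk K0 k i) \<and> knots K0 k i ! j i \<le> brk K0 k i ! s \<and> brk K0 k i ! s \<le> x $ i
      \<and> x $ i \<le> brk K0 k i ! Suc s \<and> brk K0 k i ! Suc s \<le> knots K0 k i ! (j i + p i + 1)" for i
  proof -
    have "j i + p i + 1 < length (knots K0 k i)" using j unfolding bidx_def by auto
    then show ?thesis
      using x nondeg unfolding bsupp_def mem_box_cart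
      by (intro strict_sorted_span_between[OF strict_sorted_brk knots_nth_in_brk knots_nth_in_brk]) auto
  qed
  then obtain f where f: "\<forall>i. Suc (f i) < length (brk K0 k i) \<and> knots K0 k i ! j i \<le> brk K0 k i ! f i
      \<and> brk K0 k i ! f i \<le> x $ i \<and> x $ i \<le> brk K0 k i ! Suc (f i)
      \<and> brk K0 k i ! Suc (f i) \<le> knots K0 k i ! (j i + p i + 1)"
    by metis
  have "cell K0 k f \<in> cells K0 k" using f unfolding cells_eq cell_index_def by auto
  moreover have "x \<in> cell K0 k f" using f unfolding mem_cell by auto
  moreover have "cell K0 k f \<subseteq> bsupp p K0 k j"
    using f unfolding cell_def bsupp_def subset_iff mem_box_cart vec_lambda_beta
      by (meson order_trans)
  ultimately show ?thesis by blast
qed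

text \<open>Otherwise the B-spline is active, and a mesh cell of level \<open>k\<close> in its support would be a neighbour
  of a mesh cell of level \<open>\<ge> l\<close> inside \<open>D\<close>.\<close>

lemma admissible_support_step:
  assumes h: "hier_domains K0 \<Omega>" and adm: "admissible p K0 \<Omega>"
    and j: "j \<in> bidx p K0 k" and D: "D \<in> cells K0 l" "k + 2 \<le> l" "D \<subseteq> bsupp p K0 k j" "D \<subseteq> \<Omega> l"
    and supp: "bsupp p K0 k j \<subseteq> \<Omega> k"
  shows "bsupp p K0 k j \<subseteq> \<Omega> (Suc k)"
proof (rule ccontr)
  assume not_sub: "\<not> bsupp p K0 k j \<subseteq> \<Omega> (Suc k)"
  then have active: "(k, j) \<in> hbasis p K0 \<Omega>" using j supp unfolding hbasis_def by auto
  obtain T' l' where T': "T' \<in> mesh K0 \<Omega>" "T' \<subseteq> D" "T' \<in> cells K0 l'" "l \<le> l'"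
    using mesh_cell_below[OF h D(1,4)] by blast
  obtain x where x: "x \<in> bsupp p K0 k j" "x \<notin> \<Omega> (Suc k)" using not_sub by auto
  obtain T where T: "T \<in> cells K0 k" "x \<in> T" "T \<subseteq> bsupp p K0 k j"
    using cell_in_bsupp_containing[OF j x(1)] bsupp_nondegenerate[OF D(1,3)] by blast
  have "T \<in> mesh K0 \<Omega>" unfolding mesh_def using T x supp by auto
  moreover have "T' \<in> neighbors p K0 \<Omega> T" unfolding neighbors_def
    using T'(1,2) active T(3) D(3) by (auto intro!: bexI[of _ "(k, j)"])
  ultimately have "\<bar>int (level K0 T) - int (level K0 T')\<bar> \<le> 1" using adm unfolding admissible_def
    by blast
  then show False using level_cells T(1) T'(3,4) D(2) by simp
qed

lemma admissible_imp_support_admissible: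
  assumes K0: "\<forall>i. open_knot_vector (p i) (K0 i)" and h: "hier_domains K0 \<Omega>" and adm: "admissible p K0 \<Omega>"
  shows "support_admissible p K0 \<Omega>"
proof -
  have "bsupp p K0 k j \<subseteq> \<Omega> (Suc k)"
    if "j \<in> bidx p K0 k" "D \<in> cells K0 l" "k + 2 \<le> l" "D \<subseteq> bsupp p K0 k j" "D \<subseteq> \<Omega> l" for k j l D
    using that
  proof (induction k arbitrary: j)
    case 0
    then show ?case
      using admissible_support_step[OF h adm] bsupp_subset_unit_box hier_domains_0[OF h] by simp
  next
    case (Suc k)
    show ?case
    proof (cases "bsupp p K0 (Suc k) j \<subseteq> \<Omega> (Suc k)")
      case True
      then show ?thesis using admissible_support_step[OF h adm Suc.prems] by simp
    next
      case False
      obtain j' where j': "j' \<in> bidx p K0 k" "bsupp p K0 (Suc k) j \<subseteq> bsupp p K0 k j'"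
        using bsupp_within_coarser_bsupp[OF K0 Suc.prems(1)] by blast
      then have "bsupp p K0 k j' \<subseteq> \<Omega> (Suc k)" using Suc.IH[OF j'(1) Suc.prems(2)] Suc.prems(3-5)
        by auto
      then show ?thesis using False j'(2) by auto
    qed
  qed
  then show ?thesis unfolding support_admissible_def by blast
qed

lemma support_admissible_imp_admissible:
  assumes h: "hier_domains K0 \<Omega>" and sadm: "support_admissible p K0 \<Omega>"
  shows "admissible p K0 \<Omega>"
  unfolding admissible_def
proof (intro ballI)
  fix T T' assume T: "T \<in> mesh K0 \<Omega>" and "T' \<in> neighbors p K0 \<Omega> T"
  then obtain k j where "(k, j) \<in> hbasis p K0 \<Omega>" "T \<subseteq> bsupp p K0 k j" "T' \<subseteq> bsupp p K0 k j"
    and T': "T' \<in> mesh K0 \<Omega>"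
    unfolding neighbors_def by auto
  then have j: "j \<in> bidx p K0 k" "bsupp p K0 k j \<subseteq> \<Omega> k" "\<not> bsupp p K0 k j \<subseteq> \<Omega> (Suc k)"
    unfolding hbasis_def by auto
  have level_near: "k \<le> level K0 S \<and> level K0 S \<le> Suc k" if S: "S \<in> mesh K0 \<Omega>" "S \<subseteq> bsupp p K0 k j" for S
  proof -
    obtain l where l: "S \<in> cells K0 l" "S \<subseteq> \<Omega> l" "\<not> S \<subseteq> \<Omega> (Suc l)"
      using S(1) unfolding mesh_def by auto
    have "k \<le> l" using hier_domains_antimono[OF h, of "Suc l" k] S(2) j(2) l(3)
      by (meson not_less_eq_eq order_trans)
    moreover have "l \<le> Suc k"
    proof (rule ccontr)
      assume "\<not> l \<le> Suc k"
      then have "bsupp p K0 k j \<subseteq> \<Omega> (Suc k)" using sadm l S j(1) unfolding support_admissible_def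
        by simp
      then show False using j(3) by simp
    qed
    ultimately show ?thesis using level_cells[OF l(1)] by simp
  qed
  show "\<bar>int (level K0 T) - int (level K0 T')\<bar> \<le> 1"
    using level_near[OF T] level_near[OF T'] \<open>T \<subseteq> bsupp p K0 k j\<close> \<open>T' \<subseteq> bsupp p K0 k j\<close> by linarith
qed

lemma support_admissible_union:
  assumes hb: "hier_domains K0 \<Omega>b" and hs: "hier_domains K0 \<Omega>s"
    and "support_admissible p K0 \<Omega>b" "support_admissible p K0 \<Omega>s"
  shows "support_admissible p K0 (\<lambda>k. \<Omega>b k \<union> \<Omega>s k)"
  unfolding support_admissible_def
proof (intro allI impI)
  fix k j l D
  assume D: "j \<in> bidx p K0 k" "D \<in> cells K0 l" "k + 2 \<le> l" "D \<subseteq> bsupp p K0 k j" "D \<subseteq> \<Omega>b l \<union> \<Omega>s l"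
  then have "D \<subseteq> \<Omega>b l \<or> D \<subseteq> \<Omega>s l" using cell_subset_union_domain[OF hb hs] by simp
  then show "bsupp p K0 k j \<subseteq> \<Omega>b (Suc k) \<union> \<Omega>s (Suc k)"
    using assms(3,4) D unfolding support_admissible_def by blast
qed

end

section \<open>Counting cells\<close>
definition domain_cells ::
    "('n::finite \<Rightarrow> real list) \<Rightarrow> (nat \<Rightarrow> (real^'n) set) \<Rightarrow> nat \<Rightarrow> (real^'n) set set" where
  "domain_cells K0 \<Omega> k = {C \<in> cells K0 k. C \<subseteq> \<Omega> k}"

definition refined_cells ::
    "('n::finite \<Rightarrow> real list) \<Rightarrow> (nat \<Rightarrow> (real^'n) set) \<Rightarrow> nat \<Rightarrow> (real^'n) set set" where
  "refined_cells K0 \<Omega> k = {C \<in> cells K0 k. C \<subseteq> \<Omega> (Suc k)}"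

definition children :: "('n::finite \<Rightarrow> real list) \<Rightarrow> nat \<Rightarrow> (real^'n) set \<Rightarrow> (real^'n) set set" where
  "children K0 k C = {E \<in> cells K0 (Suc k). E \<subseteq> C}"

context unit_knots
begin

lemma card_children_pos: "C \<in> cells K0 k \<Longrightarrow> 1 \<le> card (children K0 k C)"
proof -
  assume "C \<in> cells K0 k"
  then obtain m where m: "cell_index K0 k m" "C = cell K0 k m" unfolding cells_eq by auto
  obtain m' where "cell_index K0 (Suc k) m'" "cell K0 (Suc k) m' \<subseteq> C"
    using cell_has_child[OF m(1)] m(2) by blast
  then have "cell K0 (Suc k) m' \<in> children K0 k C" unfolding children_def cells_eq by auto
  moreover have "finite (children K0 k C)" unfolding children_def by (rule finite_cells_filter)
  ultimately show ?thesis by (metis One_nat_def Suc_leI card_gt_0_iff empty_iff)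
qed

lemma domain_cells_Suc_eq_UN:
  assumes h: "hier_domains K0 \<Omega>"
  shows "domain_cells K0 \<Omega> (Suc k) = (\<Union>C \<in> refined_cells K0 \<Omega> k. children K0 k C)"
proof
  show "domain_cells K0 \<Omega> (Suc k) \<subseteq> (\<Union>C \<in> refined_cells K0 \<Omega> k. children K0 k C)"
  proof
    fix E assume "E \<in> domain_cells K0 \<Omega> (Suc k)"
    then have E: "E \<in> cells K0 (Suc k)" "E \<subseteq> \<Omega> (Suc k)" unfolding domain_cells_def by auto
    then obtain m where m: "cell_index K0 (Suc k) m" "E = cell K0 (Suc k) m" unfolding cells_eq
      by auto
    obtain S where S: "S \<subseteq> cells K0 k" "\<Omega> (Suc k) = \<Union>S" using hier_domains_Suc_cells[OF h] by blast
    have "cell_center K0 (Suc k) m \<in> \<Omega> (Suc k)" using cell_center_mem[OF m(1)] m(2) E(2) by auto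
    then obtain C where C: "C \<in> S" "cell_center K0 (Suc k) m \<in> C" using S by auto
    obtain r where r: "cell_index K0 k r" "C = cell K0 k r" using C S unfolding cells_eq by auto
    have "E \<subseteq> C"
      unfolding m(2) r(2) by (rule cell_subset_cell[OF le_SucI[OF order_refl] m(1) r(1)])
        (use cell_center_strict[OF m(1)] C r in auto)
    moreover have "C \<in> refined_cells K0 \<Omega> k" unfolding refined_cells_def using C S by auto
    ultimately show "E \<in> (\<Union>C \<in> refined_cells K0 \<Omega> k. children K0 k C)" using E(1)
      unfolding children_def by auto
  qed
  show "(\<Union>C \<in> refined_cells K0 \<Omega> k. children K0 k C) \<subseteq> domain_cells K0 \<Omega> (Suc k)"
    unfolding domain_cells_def refined_cells_def children_def by auto
qed

lemma card_domain_cells_Suc: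
  assumes "hier_domains K0 \<Omega>"
  shows "card (domain_cells K0 \<Omega> (Suc k)) = (\<Sum>C \<in> refined_cells K0 \<Omega> k. card (children K0 k C))"
  unfolding domain_cells_Suc_eq_UN[OF assms]
proof (rule card_UN_disjoint)
  show "finite (refined_cells K0 \<Omega> k)" unfolding refined_cells_def by (rule finite_cells_filter)
  show "\<forall>C \<in> refined_cells K0 \<Omega> k. finite (children K0 k C)" unfolding children_def
    by (simp add: finite_cells_filter)
  show "\<forall>C \<in> refined_cells K0 \<Omega> k. \<forall>C' \<in> refined_cells K0 \<Omega> k.
      C \<noteq> C' \<longrightarrow> children K0 k C \<inter> children K0 k C' = {}"
    unfolding refined_cells_def children_def using parent_cell_unique by blast
qed

lemma mesh_eq_UN:
  assumes h: "hier_domains K0 \<Omega>" and M: "\<Omega> M = {}"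
  shows "mesh K0 \<Omega> = (\<Union>k<M. domain_cells K0 \<Omega> k - refined_cells K0 \<Omega> k)"
proof
  show "mesh K0 \<Omega> \<subseteq> (\<Union>k<M. domain_cells K0 \<Omega> k - refined_cells K0 \<Omega> k)"
  proof
    fix T assume "T \<in> mesh K0 \<Omega>"
    then obtain k where k: "T \<in> cells K0 k" "T \<subseteq> \<Omega> k" "\<not> T \<subseteq> \<Omega> (Suc k)" unfolding mesh_def by auto
    have "k < M" using hier_domains_antimono[OF h, of M k] M cell_nonempty[OF k(1)] k(2)
      by fastforce
    then show "T \<in> (\<Union>k<M. domain_cells K0 \<Omega> k - refined_cells K0 \<Omega> k)"
      using k unfolding domain_cells_def refined_cells_def by auto
  qed
  show "(\<Union>k<M. domain_cells K0 \<Omega> k - refined_cells K0 \<Omega> k) \<subseteq> mesh K0 \<Omega>"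
    unfolding domain_cells_def refined_cells_def mesh_def by auto
qed

text \<open>Each refined cell of level \<open>k\<close> leaves the mesh and is replaced by its children; the sum over
  \<open>k < M\<close> telescopes because \<open>\<Omega> M = {}\<close> and \<open>\<Omega> 0\<close> is the whole box.\<close>

lemma card_mesh_eq:
  assumes h: "hier_domains K0 \<Omega>" and M: "\<Omega> M = {}"
  shows "int (card (mesh K0 \<Omega>)) = int (card (cells K0 0)) +
           (\<Sum>k<M. \<Sum>C \<in> refined_cells K0 \<Omega> k. int (card (children K0 k C)) - 1)"
proof -
  let ?a = "\<lambda>k. int (card (domain_cells K0 \<Omega> k))" and ?b = "\<lambda>k. int (card (refined_cells K0 \<Omega> k))"
  have fin: "finite (domain_cells K0 \<Omega> k)" "finite (refined_cells K0 \<Omega> k)" for k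
    unfolding domain_cells_def refined_cells_def by (rule finite_cells_filter)+
  have sub: "refined_cells K0 \<Omega> k \<subseteq> domain_cells K0 \<Omega> k" for k
    unfolding domain_cells_def refined_cells_def using hier_domains_Suc_subset[OF h] by blast
  have dom0: "domain_cells K0 \<Omega> 0 = cells K0 0"
    unfolding domain_cells_def using cells_subset_unit_box hier_domains_0[OF h] by auto
  have "card (mesh K0 \<Omega>) = (\<Sum>k<M. card (domain_cells K0 \<Omega> k - refined_cells K0 \<Omega> k))"
    unfolding mesh_eq_UN[OF h M]
    by (rule card_UN_disjoint) (use fin in \<open>auto simp: domain_cells_def dest: cells_level_unique\<close>)
  then have "int (card (mesh K0 \<Omega>)) = (\<Sum>k<M. ?a k - ?b k)"
    using card_Diff_subset[OF fin(2) sub] card_mono[OF fin(1) sub] by (simp add: of_nat_diff)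
  also have "\<dots> = (\<Sum>k<M. ?a k) - (\<Sum>k<M. ?b k)" by (simp add: sum_subtractf)
  also have "(\<Sum>k<M. ?a k) = ?a 0 + (\<Sum>k<M. ?a (Suc k))"
  proof -
    have "?a M = 0" unfolding domain_cells_def using M cell_nonempty by auto
    then show ?thesis using sum.lessThan_Suc[of ?a M] sum.lessThan_Suc_shift[of ?a M] by simp
  qed
  also have "?a 0 + (\<Sum>k<M. ?a (Suc k)) - (\<Sum>k<M. ?b k) = int (card (cells K0 0)) +
      (\<Sum>k<M. \<Sum>C \<in> refined_cells K0 \<Omega> k. int (card (children K0 k C)) - 1)"
    using dom0 by (simp add: card_domain_cells_Suc[OF h] sum_subtractf)
  finally show ?thesis .
qed

lemma refined_cells_union:
  assumes hb: "hier_domains K0 \<Omega>b" and hs: "hier_domains K0 \<Omega>s"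
  shows "refined_cells K0 (\<lambda>k. \<Omega>b k \<union> \<Omega>s k) k = refined_cells K0 \<Omega>b k \<union> refined_cells K0 \<Omega>s k"
  using cell_subset_union_domain[OF hb hs _ _ order_refl] unfolding refined_cells_def by blast

lemma card_mesh_union_le:
  assumes hb: "hier_domains K0 \<Omega>b" and hs: "hier_domains K0 \<Omega>s"
  shows "int (card (mesh K0 (\<lambda>k. \<Omega>b k \<union> \<Omega>s k)))
        \<le> int (card (mesh K0 \<Omega>b)) + int (card (mesh K0 \<Omega>s)) - int (card (cells K0 0))"
proof -
  obtain M where Mb: "\<Omega>b M = {}" and Ms: "\<Omega>s M = {}" by (rule hier_domains_common_empty[OF hb hs])
  define f where "f k C = int (card (children K0 k C)) - 1" for k C
  define S where "S \<Omega> = (\<Sum>k<M. \<Sum>C \<in> refined_cells K0 \<Omega> k. f k C)" for \<Omega>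
  have "(\<Sum>C \<in> refined_cells K0 (\<lambda>k. \<Omega>b k \<union> \<Omega>s k) k. f k C)
      \<le> (\<Sum>C \<in> refined_cells K0 \<Omega>b k. f k C) + (\<Sum>C \<in> refined_cells K0 \<Omega>s k. f k C)" for k
  proof -
    have fin: "finite (refined_cells K0 \<Omega> k)" for \<Omega> unfolding refined_cells_def
      by (rule finite_cells_filter)
    have "0 \<le> (\<Sum>C \<in> refined_cells K0 \<Omega>b k \<inter> refined_cells K0 \<Omega>s k. f k C)"
      by (intro sum_nonneg) (auto simp: f_def refined_cells_def dest!: card_children_pos)
    then show ?thesis
      unfolding refined_cells_union[OF hb hs]
        using sum.union_inter[OF fin[of \<Omega>b] fin[of \<Omega>s], of "f k"] by linarith
  qed
  then have "S (\<lambda>k. \<Omega>b k \<union> \<Omega>s k) \<le> S \<Omega>b + S \<Omega>s"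
    unfolding S_def by (simp add: sum.distrib[symmetric] sum_mono)
  moreover have card_eq: "int (card (mesh K0 \<Omega>)) = int (card (cells K0 0)) + S \<Omega>"
    if "hier_domains K0 \<Omega>" "\<Omega> M = {}" for \<Omega>
    unfolding S_def f_def by (rule card_mesh_eq[OF that])
  ultimately show ?thesis
    using card_eq[OF hier_domains_union[OF hb hs]] card_eq[OF hb Mb] card_eq[OF hs Ms] Mb Ms by simp
qed

end

theorem mainTheorem10:
  fixes p :: "'n::finite \<Rightarrow> nat" and K0 :: "'n \<Rightarrow> real list"
    and \<Omega>b \<Omega>s :: "nat \<Rightarrow> (real^'n) set"
  assumes "CARD('n) \<ge> 2"
    and "\<forall>i. p i \<ge> 1"
    and "\<forall>i. open_knot_vector (p i) (K0 i)"
    and "hier_domains K0 \<Omega>b" and "admissible p K0 \<Omega>b"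
    and "hier_domains K0 \<Omega>s" and "admissible p K0 \<Omega>s"
  shows "hier_domains K0 (\<lambda>k. \<Omega>b k \<union> \<Omega>s k)
    \<and> admissible p K0 (\<lambda>k. \<Omega>b k \<union> \<Omega>s k)
    \<and> finer (\<lambda>k. \<Omega>b k \<union> \<Omega>s k) \<Omega>b
    \<and> finer (\<lambda>k. \<Omega>b k \<union> \<Omega>s k) \<Omega>s
    \<and> int (card (mesh K0 (\<lambda>k. \<Omega>b k \<union> \<Omega>s k)))
        \<le> int (card (mesh K0 \<Omega>b)) + int (card (mesh K0 \<Omega>s)) - int (card (cells K0 0))"
proof -
  interpret unit_knots K0 using assms(3) by (rule unit_knots_if_open)
  have hier: "hier_domains K0 (\<lambda>k. \<Omega>b k \<union> \<Omega>s k)" by (rule hier_domains_union[OF assms(4,6)])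
  have "support_admissible p K0 (\<lambda>k. \<Omega>b k \<union> \<Omega>s k)"
    using support_admissible_union[OF assms(4,6)]
      admissible_imp_support_admissible[OF assms(3,4,5)]
      admissible_imp_support_admissible[OF assms(3,6,7)]
    by blast
  then have "admissible p K0 (\<lambda>k. \<Omega>b k \<union> \<Omega>s k)"
    by (rule support_admissible_imp_admissible[OF hier])
  moreover have "finer (\<lambda>k. \<Omega>b k \<union> \<Omega>s k) \<Omega>b" "finer (\<lambda>k. \<Omega>b k \<union> \<Omega>s k) \<Omega>s"
    unfolding finer_def by auto
  ultimately show ?thesis using hier card_mesh_union_le[OF assms(4,6)] by blast
qed

end
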